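(* Let $\widehat{G}$ be a signed complete bigraph. Then $\widehat{G}$ is chordal if and only if it does not contain any signed graph in $F_1\cup F_2\cup F_3\cup F_4$ as an induced subgraph, where: $F_1$ consists of the single signed graph $K_{2,2}$ (a 4-cycle) with all four edges negative; $F_2$: the complete bigraph with parts $\{a_1,a_2\}$, $\{b_1,b_2,b_3\}$, with $a_1b_1,a_1b_2,a_2b_2,a_2b_3$ negative and $a_1b_3,a_2b_1$ free; $F_3$: the complete bigraph with parts $\{a_1,a_2\}$, $\{b_1,b_2,b_3,b_4\}$, with $a_1b_1,a_1b_2,a_2b_3,a_2b_4$ negative and the other four edges free; $F_4$: the complete bigraph with parts $\{a_1,a_2,a_3\}$, $\{b_1,b_2,b_3\}$, with $a_1b_1,a_2b_2,a_3b_3$ negative and the other six edges free.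
   Context: A signed graph is a finite simple graph each of whose edges is assigned a sign, positive or negative. A signed bigraph is a signed graph whose underlying graph is bipartite, with bipartition $(X,Y)$; it is a signed complete bigraph if the underlying graph is complete bipartite. An induced subgraph is obtained by deleting vertices only (signs are inherited); $\widehat G$ contains $H$ as an induced subgraph if some induced subgraph of $\widehat G$ is isomorphic to $H$ via a sign-preserving isomorphism. A signed graph is positive if all its edges are positive. In a bigraph with bipartition $(X,Y)$, a subgraph $H$ is a biclique if every vertex of $V(H)\cap X$ is adjacent to every vertex of $V(H)\cap Y$. For an edge $uv$, $N(uv)=(N(u)\cup N(v))\setminus\{u,v\}$. An edge $uv$ of a signed bigraph is signed simplicial if $N(uv)$ induces a positive biclique. A signed bigraph $\widehat G$ is chordal if its edges can be ordered $e_1,\dots,e_m$ so that each $e_i$ is signed simplicial in the signed bigraph $\widehat G-\{e_1,\dots,e_{i-1}\}$ obtained by deleting these edges (but no vertices). A family described by a graph with some edges declared negative, some positive, and the rest declared free, is the set of all signed graphs obtained by giving each free edge an arbitrary sign. *)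

theory Defs
  imports Main
begin

(* A signed graph on vertex set V: edge set E (a set of 2-element vertex sets)
   together with a sign function pos on edges (pos e = True: positive, False: negative). *)

definition bi_edges :: "'a set \<Rightarrow> 'a set \<Rightarrow> 'a set set" where
  "bi_edges X Y = {{x, y} | x y. x \<in> X \<and> y \<in> Y}"

definition signed_complete_bigraph :: "'a set \<Rightarrow> 'a set \<Rightarrow> 'a set set \<Rightarrow> bool" where
  "signed_complete_bigraph X Y E \<longleftrightarrow>
     finite X \<and> finite Y \<and> X \<inter> Y = {} \<and> E = bi_edges X Y"

definition nbr :: "'a set set \<Rightarrow> 'a \<Rightarrow> 'a set" where
  "nbr E u = {w. {u, w} \<in> E}"

definition edge_nbr :: "'a set set \<Rightarrow> 'a \<Rightarrow> 'a \<Rightarrow> 'a set" where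
  "edge_nbr E u v = (nbr E u \<union> nbr E v) - {u, v}"

definition positive_biclique :: "'a set \<Rightarrow> 'a set \<Rightarrow> 'a set set \<Rightarrow> ('a set \<Rightarrow> bool) \<Rightarrow> 'a set \<Rightarrow> bool" where
  "positive_biclique X Y E pos S \<longleftrightarrow>
     (\<forall>x \<in> S \<inter> X. \<forall>y \<in> S \<inter> Y. {x, y} \<in> E) \<and>
     (\<forall>f \<in> E. f \<subseteq> S \<longrightarrow> pos f)"

definition signed_simplicial :: "'a set \<Rightarrow> 'a set \<Rightarrow> 'a set set \<Rightarrow> ('a set \<Rightarrow> bool) \<Rightarrow> 'a set \<Rightarrow> bool" where
  "signed_simplicial X Y E pos e \<longleftrightarrow>
     e \<in> E \<and> (\<exists>u v. e = {u, v} \<and> positive_biclique X Y E pos (edge_nbr E u v))"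

definition chordal :: "'a set \<Rightarrow> 'a set \<Rightarrow> 'a set set \<Rightarrow> ('a set \<Rightarrow> bool) \<Rightarrow> bool" where
  "chordal X Y E pos \<longleftrightarrow>
     (\<exists>es. distinct es \<and> set es = E \<and>
        (\<forall>i < length es. signed_simplicial X Y (E - set (take i es)) pos (es ! i)))"

definition contains_induced ::
  "'b set \<Rightarrow> 'b set set \<Rightarrow> ('b set \<Rightarrow> bool) \<Rightarrow> 'a set \<Rightarrow> 'a set set \<Rightarrow> ('a set \<Rightarrow> bool) \<Rightarrow> bool" where
  "contains_induced VH EH posH V E pos \<longleftrightarrow>
     (\<exists>\<phi>. inj_on \<phi> VH \<and> \<phi> ` VH \<subseteq> V \<and>
        (\<forall>a \<in> VH. \<forall>b \<in> VH.
           ({a, b} \<in> EH \<longleftrightarrow> {\<phi> a, \<phi> b} \<in> E) \<and>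
           ({a, b} \<in> EH \<longrightarrow> posH {a, b} = pos {\<phi> a, \<phi> b})))"

(* vertices of the forbidden graphs: a_i = A i, b_j = B j *)
datatype hv = A nat | B nat

definition Kverts :: "nat \<Rightarrow> nat \<Rightarrow> hv set" where
  "Kverts m n = A ` {1..m} \<union> B ` {1..n}"

definition Kedges :: "nat \<Rightarrow> nat \<Rightarrow> hv set set" where
  "Kedges m n = bi_edges (A ` {1..m}) (B ` {1..n})"

(* a family: K_{m,n} with the edges a_i b_j, (i,j) \<in> negs, declared negative, all others free *)
definition family_member :: "nat \<times> nat \<times> (nat \<times> nat) set \<Rightarrow> (hv set \<Rightarrow> bool) \<Rightarrow> bool" where
  "family_member F posH \<longleftrightarrow> (case F of (m, n, negs) \<Rightarrow> \<forall>(i, j) \<in> negs. \<not> posH {A i, B j})"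

definition F1 :: "nat \<times> nat \<times> (nat \<times> nat) set" where
  "F1 = (2, 2, {(1,1), (1,2), (2,1), (2,2)})"
definition F2 :: "nat \<times> nat \<times> (nat \<times> nat) set" where
  "F2 = (2, 3, {(1,1), (1,2), (2,2), (2,3)})"
definition F3 :: "nat \<times> nat \<times> (nat \<times> nat) set" where
  "F3 = (2, 4, {(1,1), (1,2), (2,3), (2,4)})"
definition F4 :: "nat \<times> nat \<times> (nat \<times> nat) set" where
  "F4 = (3, 3, {(1,1), (2,2), (3,3)})"

definition contains_family :: "nat \<times> nat \<times> (nat \<times> nat) set \<Rightarrow> 'a set \<Rightarrow> 'a set set \<Rightarrow> ('a set \<Rightarrow> bool) \<Rightarrow> bool" where
  "contains_family F V E pos \<longleftrightarrow>
     (case F of (m, n, negs) \<Rightarrow>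
        \<exists>posH. family_member F posH \<and> contains_induced (Kverts m n) (Kedges m n) posH V E pos)"

end

theory Submission
  imports Defs
begin

text \<open>In a complete bigraph the edge-neighbourhood of an edge \<open>uv\<close> is every vertex except \<open>u\<close> and
  \<open>v\<close>, so \<open>uv\<close> is signed simplicial exactly when every negative edge meets \<open>u\<close> or \<open>v\<close>: the
  negative edges lie on the "cross" of row \<open>u\<close> and column \<open>v\<close>. Hence the first edge of an
  elimination ordering forces the negatives onto a cross, and conversely, if they lie on a cross,
  the edges can be eliminated row by row. It remains to see that the negative edges lie on a cross
  iff none of \<open>F1\<close>--\<open>F4\<close> occurs: an induced copy of a forbidden graph carries a pattern of
  negative edges that no cross covers, and a negative edge set avoiding every cross contains one
  of these patterns by a case analysis on four suitably chosen negative edges.\<close>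

lemma bi_edges_doubleton_iff:
  "{a, b} \<in> bi_edges X Y \<longleftrightarrow> a \<in> X \<and> b \<in> Y \<or> a \<in> Y \<and> b \<in> X"
  unfolding bi_edges_def by (auto simp: doubleton_eq_iff)

lemma bi_edges_commute: "bi_edges X Y = bi_edges Y X"
  unfolding bi_edges_def by (auto simp: insert_commute)

lemma bi_edges_empty_iff: "bi_edges X Y = {} \<longleftrightarrow> X = {} \<or> Y = {}"
  unfolding bi_edges_def by auto

lemma bi_edges_empty [simp]: "bi_edges {} Y = {}" "bi_edges X {} = {}"
  unfolding bi_edges_def by auto

lemma chordal_empty: "chordal X Y {} pos"
  unfolding chordal_def by (intro exI[of _ "[]"]) simp

lemma chordal_insert:
  assumes "e \<notin> R" "signed_simplicial X Y (insert e R) pos e" "chordal X Y R pos"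
  shows "chordal X Y (insert e R) pos"
proof -
  obtain es where es: "distinct es" "set es = R"
    "\<forall>i < length es. signed_simplicial X Y (R - set (take i es)) pos (es ! i)"
    using assms(3) unfolding chordal_def by blast
  have "signed_simplicial X Y (insert e R - set (take i (e # es))) pos ((e # es) ! i)"
    if "i < length (e # es)" for i
  proof (cases i)
    case 0
    then show ?thesis using assms(2) by simp
  next
    case (Suc j)
    then have "insert e R - set (take i (e # es)) = R - set (take j es)"
      using assms(1) es(2) by auto
    then show ?thesis using es(3) Suc that by simp
  qed
  then show ?thesis
    unfolding chordal_def using es assms(1) by (intro exI[of _ "e # es"]) auto
qed

lemma row_edge_signed_simplicial:
  assumes "X \<inter> Y = {}" "Xr \<subseteq> X" "x0 \<in> X - Xr" "S \<subseteq> Y" "y \<in> S"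
    and "\<forall>x\<in>Xr. \<forall>y'\<in>S - {y}. pos {x, y'}"
  shows "signed_simplicial X Y (bi_edges Xr Y \<union> bi_edges {x0} S) pos {x0, y}"
proof -
  let ?R = "bi_edges Xr Y \<union> bi_edges {x0} S"
  have "nbr ?R x0 = S" "nbr ?R y = insert x0 Xr"
    unfolding nbr_def using assms by (auto simp: bi_edges_doubleton_iff)
  moreover have "y \<notin> Xr" "x0 \<notin> S" "x0 \<notin> Xr" using assms by auto
  ultimately have N: "edge_nbr ?R x0 y = (S - {y}) \<union> Xr"
    unfolding edge_nbr_def by auto
  have "pos f" if "f \<in> ?R" "f \<subseteq> S - {y} \<union> Xr" for f
  proof -
    have "x0 \<notin> f" using that(2) assms by auto
    then have "f \<in> bi_edges Xr Y" using that(1) unfolding bi_edges_def by auto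
    then obtain x y' where "f = {x, y'}" "x \<in> Xr" "y' \<in> Y"
      unfolding bi_edges_def by auto
    then show ?thesis using that assms by auto
  qed
  then have "positive_biclique X Y ?R pos (S - {y} \<union> Xr)"
    unfolding positive_biclique_def using assms by (auto simp: bi_edges_doubleton_iff)
  then show ?thesis
    unfolding signed_simplicial_def N[symmetric] using assms(5) by (auto simp: bi_edges_doubleton_iff)
qed

lemma chordal_add_partial_row:
  assumes "finite S" "X \<inter> Y = {}" "Xr \<subseteq> X" "x0 \<in> X - Xr" "S \<subseteq> Y"
    and "\<forall>x\<in>Xr. \<forall>y\<in>S. pos {x, y}" and "chordal X Y (bi_edges Xr Y) pos"
  shows "chordal X Y (bi_edges Xr Y \<union> bi_edges {x0} S) pos"
  using assms(1,5,6)
proof (induction S rule: finite_induct)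
  case empty
  then show ?case using assms(7) by simp
next
  case (insert y S)
  have "bi_edges Xr Y \<union> bi_edges {x0} (insert y S) = insert {x0, y} (bi_edges Xr Y \<union> bi_edges {x0} S)"
    unfolding bi_edges_def by auto
  moreover have "{x0, y} \<notin> bi_edges Xr Y \<union> bi_edges {x0} S"
    using assms(2-4) insert by (auto simp: bi_edges_doubleton_iff)
  moreover have "signed_simplicial X Y (bi_edges Xr Y \<union> bi_edges {x0} (insert y S)) pos {x0, y}"
    using insert.prems by (intro row_edge_signed_simplicial) (use assms(2-4) in auto)
  moreover have "chordal X Y (bi_edges Xr Y \<union> bi_edges {x0} S) pos"
    using insert by simp
  ultimately show ?case using chordal_insert by metis
qed

lemma chordal_add_row:
  assumes "finite Y" "X \<inter> Y = {}" "Xr \<subseteq> X" "x0 \<in> X - Xr" "v \<in> Y"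
    and "\<forall>x\<in>Xr. \<forall>y\<in>Y - {v}. pos {x, y}" and "chordal X Y (bi_edges Xr Y) pos"
  shows "chordal X Y (bi_edges (insert x0 Xr) Y) pos"
proof -
  let ?R = "bi_edges Xr Y \<union> bi_edges {x0} (Y - {v})"
  have "bi_edges (insert x0 Xr) Y = insert {x0, v} ?R"
    using assms(5) unfolding bi_edges_def by auto
  moreover have "{x0, v} \<notin> ?R"
    using assms(2-5) by (auto simp: bi_edges_doubleton_iff)
  moreover have "signed_simplicial X Y (bi_edges Xr Y \<union> bi_edges {x0} Y) pos {x0, v}"
    by (rule row_edge_signed_simplicial) (use assms in auto)
  moreover have "bi_edges Xr Y \<union> bi_edges {x0} Y = bi_edges (insert x0 Xr) Y"
    unfolding bi_edges_def by auto
  moreover have "chordal X Y ?R pos"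
    by (rule chordal_add_partial_row) (use assms in auto)
  ultimately show ?thesis using chordal_insert by metis
qed

lemma chordal_rows:
  assumes "finite Xr" "finite Y" "X \<inter> Y = {}" "Xr \<subseteq> X" "v \<in> Y"
    and "\<forall>x\<in>Xr. \<forall>y\<in>Y - {v}. pos {x, y}"
  shows "chordal X Y (bi_edges Xr Y) pos"
  using assms(1,4,6)
proof (induction Xr rule: finite_induct)
  case empty
  then show ?case using chordal_empty by simp
next
  case (insert x Xr)
  then show ?case using assms(2,3,5) by (intro chordal_add_row) auto
qed

text \<open>Eliminate the rows of \<open>X - {u}\<close> one by one and the row of \<open>u\<close> first, each row starting
  with its edge to \<open>v\<close>: the edge-neighbourhood of the current edge then avoids both \<open>u\<close> and \<open>v\<close>.\<close>

lemma chordal_if_positive_off_cross: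
  assumes "signed_complete_bigraph X Y E" "u \<in> X" "v \<in> Y"
    and "\<forall>x\<in>X - {u}. \<forall>y\<in>Y - {v}. pos {x, y}"
  shows "chordal X Y E pos"
proof -
  have fin: "finite X" "finite Y" "X \<inter> Y = {}" "E = bi_edges X Y"
    using assms(1) unfolding signed_complete_bigraph_def by auto
  have "chordal X Y (bi_edges (X - {u}) Y) pos"
    by (rule chordal_rows) (use fin assms(3,4) in auto)
  then have "chordal X Y (bi_edges (insert u (X - {u})) Y) pos"
    by (intro chordal_add_row) (use fin assms in auto)
  then show ?thesis using fin assms(2) by (simp add: insert_absorb)
qed

definition on_cross :: "('a \<times> 'b) set \<Rightarrow> bool" where
  "on_cross R \<longleftrightarrow> (\<exists>a b. \<forall>(x, y)\<in>R. x = a \<or> y = b)"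

definition negative_pairs :: "'a set \<Rightarrow> 'a set \<Rightarrow> ('a set \<Rightarrow> bool) \<Rightarrow> ('a \<times> 'a) set" where
  "negative_pairs X Y pos = {(x, y). x \<in> X \<and> y \<in> Y \<and> \<not> pos {x, y}}"

lemma on_cross_subset: "on_cross R \<Longrightarrow> S \<subseteq> R \<Longrightarrow> on_cross S"
  unfolding on_cross_def by blast

lemma on_cross_converse [simp]: "on_cross (R\<inverse>) \<longleftrightarrow> on_cross R"
  unfolding on_cross_def by blast

lemma on_cross_map_prod_inj:
  assumes "on_cross (map_prod f g ` S)" "inj_on f (fst ` S)" "inj_on g (snd ` S)"
  shows "on_cross S"
proof -
  obtain a b where ab: "\<forall>(x, y)\<in>map_prod f g ` S. x = a \<or> y = b"
    using assms(1) unfolding on_cross_def by blast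
  have "i = inv_into (fst ` S) f a \<or> j = inv_into (snd ` S) g b" if "(i, j) \<in> S" for i j
  proof -
    have "f i = a \<or> g j = b" using ab that by fastforce
    moreover have "i \<in> fst ` S" "j \<in> snd ` S" using that by force+
    ultimately show ?thesis using assms(2,3) inv_into_f_f by metis
  qed
  then show ?thesis unfolding on_cross_def by blast
qed

lemma negative_pairs_commute: "negative_pairs Y X pos = (negative_pairs X Y pos)\<inverse>"
  unfolding negative_pairs_def by (auto simp: insert_commute)

lemma negative_pair_meets_signed_simplicial:
  assumes "X \<inter> Y = {}" "signed_simplicial X Y (bi_edges X Y) pos {p, q}"
    and "(x, y) \<in> negative_pairs X Y pos"
  shows "x \<in> {p, q} \<or> y \<in> {p, q}"
proof (rule ccontr)
  assume off: "\<not> (x \<in> {p, q} \<or> y \<in> {p, q})"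
  let ?E = "bi_edges X Y"
  obtain u v where uv: "{u, v} = {p, q}" "positive_biclique X Y ?E pos (edge_nbr ?E u v)"
    using assms(2) unfolding signed_simplicial_def by auto
  have "u \<in> X \<and> v \<in> Y \<or> u \<in> Y \<and> v \<in> X"
    using assms(2) uv(1) unfolding signed_simplicial_def by (auto simp: bi_edges_doubleton_iff)
  moreover have "x \<in> X" "y \<in> Y" "\<not> pos {x, y}"
    using assms(3) unfolding negative_pairs_def by auto
  ultimately have "{x, y} \<subseteq> edge_nbr ?E u v" "{x, y} \<in> ?E"
    using off uv(1) assms(1) unfolding edge_nbr_def nbr_def
    by (auto simp: bi_edges_doubleton_iff doubleton_eq_iff)
  then show False
    using uv(2) \<open>\<not> pos {x, y}\<close> unfolding positive_biclique_def by blast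
qed

lemma on_cross_if_signed_simplicial:
  assumes "X \<inter> Y = {}" "signed_simplicial X Y (bi_edges X Y) pos e"
  shows "on_cross (negative_pairs X Y pos)"
proof -
  obtain p q where pq: "e = {p, q}" "p \<in> X" "q \<in> Y"
    using assms(2) unfolding signed_simplicial_def bi_edges_def by auto
  have "x = p \<or> y = q" if "(x, y) \<in> negative_pairs X Y pos" for x y
    using negative_pair_meets_signed_simplicial[OF assms(1) assms(2)[unfolded pq(1)] that]
      that pq assms(1) unfolding negative_pairs_def by auto
  then show ?thesis unfolding on_cross_def by blast
qed

lemma chordal_iff_on_cross:
  assumes "signed_complete_bigraph X Y E"
  shows "chordal X Y E pos \<longleftrightarrow> on_cross (negative_pairs X Y pos)"
proof -
  have E: "X \<inter> Y = {}" "E = bi_edges X Y"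
    using assms unfolding signed_complete_bigraph_def by auto
  consider "X = {} \<or> Y = {}" | "X \<noteq> {}" "Y \<noteq> {}" by blast
  then show ?thesis
  proof cases
    case 1
    then show ?thesis using E chordal_empty by (auto simp: on_cross_def negative_pairs_def)
  next
    case 2
    show ?thesis
    proof
      assume "chordal X Y E pos"
      then obtain es where es: "set es = E"
        "\<forall>i < length es. signed_simplicial X Y (E - set (take i es)) pos (es ! i)"
        unfolding chordal_def by blast
      moreover have "E \<noteq> {}" using E(2) 2 by (simp add: bi_edges_empty_iff)
      ultimately have "signed_simplicial X Y E pos (es ! 0)" by (cases es) auto
      then show "on_cross (negative_pairs X Y pos)"
        using on_cross_if_signed_simplicial E by simp
    next
      assume "on_cross (negative_pairs X Y pos)"
      then obtain a b where ab: "\<forall>(x, y)\<in>negative_pairs X Y pos. x = a \<or> y = b"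
        unfolding on_cross_def by blast
      obtain u v where "u \<in> X" "a \<in> X \<Longrightarrow> u = a" "v \<in> Y" "b \<in> Y \<Longrightarrow> v = b"
        using 2 by blast
      moreover from this have "\<forall>x\<in>X - {u}. \<forall>y\<in>Y - {v}. pos {x, y}"
        using ab unfolding negative_pairs_def by fastforce
      ultimately show "chordal X Y E pos"
        using chordal_if_positive_off_cross[OF assms] by blast
    qed
  qed
qed

lemma bi_edges_biclique_sides:
  assumes "X \<inter> Y = {}" "i0 \<in> I" "j0 \<in> J" "\<forall>i\<in>I. \<forall>j\<in>J. {a i, b j} \<in> bi_edges X Y"
  shows "a ` I \<subseteq> X \<and> b ` J \<subseteq> Y \<or> a ` I \<subseteq> Y \<and> b ` J \<subseteq> X"
  using assms unfolding bi_edges_doubleton_iff by blast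

lemma contains_family_on_cross:
  assumes "X \<inter> Y = {}" "on_cross (negative_pairs X Y pos)"
    and "contains_family (m, n, negs) (X \<union> Y) (bi_edges X Y) pos" "negs \<subseteq> {1..m} \<times> {1..n}"
  shows "on_cross negs"
proof (cases "negs = {}")
  case True
  then show ?thesis unfolding on_cross_def by blast
next
  case False
  then obtain i0 j0 where "(i0, j0) \<in> negs" by auto
  then have ij0: "i0 \<in> {1..m}" "j0 \<in> {1..n}" using assms(4) by auto
  obtain posH \<phi> where fm: "family_member (m, n, negs) posH" and inj: "inj_on \<phi> (Kverts m n)"
    and emb: "\<forall>p\<in>Kverts m n. \<forall>q\<in>Kverts m n.
      ({p, q} \<in> Kedges m n \<longleftrightarrow> {\<phi> p, \<phi> q} \<in> bi_edges X Y) \<and>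
      ({p, q} \<in> Kedges m n \<longrightarrow> posH {p, q} = pos {\<phi> p, \<phi> q})"
    using assms(3) unfolding contains_family_def contains_induced_def by auto
  let ?a = "\<lambda>i. \<phi> (A i)" and ?b = "\<lambda>j. \<phi> (B j)"
  have K: "A i \<in> Kverts m n" "B j \<in> Kverts m n" "{A i, B j} \<in> Kedges m n"
    if "i \<in> {1..m}" "j \<in> {1..n}" for i j
    using that unfolding Kverts_def Kedges_def by (auto simp: bi_edges_doubleton_iff)
  have "\<forall>i\<in>{1..m}. \<forall>j\<in>{1..n}. {?a i, ?b j} \<in> bi_edges X Y" using K emb by blast
  then have sides: "?a ` {1..m} \<subseteq> X \<and> ?b ` {1..n} \<subseteq> Y \<or> ?a ` {1..m} \<subseteq> Y \<and> ?b ` {1..n} \<subseteq> X"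
    by (rule bi_edges_biclique_sides[OF assms(1) ij0])
  have neg: "\<not> pos {?a i, ?b j}" if "(i, j) \<in> negs" for i j
  proof -
    have "i \<in> {1..m}" "j \<in> {1..n}" using that assms(4) by auto
    then have "posH {A i, B j} = pos {?a i, ?b j}" using K emb by blast
    then show ?thesis using that fm unfolding family_member_def by auto
  qed
  have neg_pairs: "map_prod ?a ?b ` negs \<subseteq> negative_pairs S T pos"
    if "?a ` {1..m} \<subseteq> S" "?b ` {1..n} \<subseteq> T" for S T
    using that neg assms(4) unfolding negative_pairs_def by fastforce
  from sides have "on_cross (map_prod ?a ?b ` negs)"
  proof
    assume "?a ` {1..m} \<subseteq> X \<and> ?b ` {1..n} \<subseteq> Y"
    then show ?thesis using on_cross_subset[OF assms(2) neg_pairs] by simp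
  next
    assume "?a ` {1..m} \<subseteq> Y \<and> ?b ` {1..n} \<subseteq> X"
    then have "map_prod ?a ?b ` negs \<subseteq> (negative_pairs X Y pos)\<inverse>"
      using neg_pairs[of Y X] unfolding negative_pairs_commute[of X Y pos] by simp
    then show ?thesis using on_cross_subset[of "(negative_pairs X Y pos)\<inverse>"] assms(2) by simp
  qed
  moreover have "inj_on ?a {1..m}" "inj_on ?b {1..n}"
    using inj_on_subset[OF inj] unfolding Kverts_def inj_on_def by blast+
  moreover have "fst ` negs \<subseteq> {1..m}" "snd ` negs \<subseteq> {1..n}"
    using assms(4) by auto
  ultimately show ?thesis by (metis on_cross_map_prod_inj inj_on_subset)
qed

definition contains_forbidden :: "'a set \<Rightarrow> 'a set \<Rightarrow> ('a set \<Rightarrow> bool) \<Rightarrow> bool" where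
  "contains_forbidden X Y pos \<longleftrightarrow>
     (\<exists>F \<in> {F1, F2, F3, F4}. contains_family F (X \<union> Y) (bi_edges X Y) pos)"

lemma contains_forbidden_commute: "contains_forbidden Y X pos = contains_forbidden X Y pos"
  unfolding contains_forbidden_def by (simp add: Un_commute bi_edges_commute)

lemma not_contains_forbidden_if_on_cross:
  assumes "X \<inter> Y = {}" "on_cross (negative_pairs X Y pos)"
  shows "\<not> contains_forbidden X Y pos"
proof
  assume "contains_forbidden X Y pos"
  then obtain m n negs where F: "(m, n, negs) \<in> {F1, F2, F3, F4}"
    and "contains_family (m, n, negs) (X \<union> Y) (bi_edges X Y) pos"
    unfolding contains_forbidden_def by (metis prod_cases3)
  moreover have "negs \<subseteq> {1..m} \<times> {1..n}" "\<not> on_cross negs"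
    using F unfolding F1_def F2_def F3_def F4_def on_cross_def by auto
  ultimately show False using contains_family_on_cross[OF assms] by blast
qed

lemma contains_family_if_negative_pairs:
  assumes "X \<inter> Y = {}" "distinct as" "distinct bs" "set as \<subseteq> X" "set bs \<subseteq> Y"
    and "\<forall>(i, j)\<in>negs. (as ! (i - 1), bs ! (j - 1)) \<in> negative_pairs X Y pos"
  shows "contains_family (length as, length bs, negs) (X \<union> Y) (bi_edges X Y) pos"
proof -
  let ?m = "length as" and ?n = "length bs"
  define \<phi> where "\<phi> w = (case w of A i \<Rightarrow> as ! (i - 1) | B j \<Rightarrow> bs ! (j - 1))" for w
  have side: "\<phi> (A i) \<in> X" "\<phi> (A i) \<notin> Y" if "1 \<le> i" "i \<le> ?m" for i
  proof -
    have "as ! (i - 1) \<in> set as" using that by (intro nth_mem) simp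
    then show "\<phi> (A i) \<in> X" "\<phi> (A i) \<notin> Y" using assms(1,4) unfolding \<phi>_def by auto
  qed
  have side': "\<phi> (B j) \<in> Y" "\<phi> (B j) \<notin> X" if "1 \<le> j" "j \<le> ?n" for j
  proof -
    have "bs ! (j - 1) \<in> set bs" using that by (intro nth_mem) simp
    then show "\<phi> (B j) \<in> Y" "\<phi> (B j) \<notin> X" using assms(1,5) unfolding \<phi>_def by auto
  qed
  have "inj_on \<phi> (Kverts ?m ?n)"
  proof (rule inj_onI)
    fix p q assume pq: "p \<in> Kverts ?m ?n" "q \<in> Kverts ?m ?n" and eq: "\<phi> p = \<phi> q"
    show "p = q"
    proof (cases p; cases q)
      fix i j assume "p = A i" "q = B j"
      then have "\<phi> p \<in> X" "\<phi> q \<in> Y" using pq side side' unfolding Kverts_def by auto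
      then show ?thesis using eq assms(1) by auto
    next
      fix i j assume "p = B i" "q = A j"
      then have "\<phi> p \<in> Y" "\<phi> q \<in> X" using pq side side' unfolding Kverts_def by auto
      then show ?thesis using eq assms(1) by auto
    qed (use pq eq in \<open>auto simp: \<phi>_def Kverts_def nth_eq_iff_index_eq assms(2,3)\<close>)
  qed
  moreover have "\<phi> ` Kverts ?m ?n \<subseteq> X \<union> Y"
    using side side' unfolding Kverts_def by auto
  moreover have "{p, q} \<in> Kedges ?m ?n \<longleftrightarrow> {\<phi> p, \<phi> q} \<in> bi_edges X Y"
    if "p \<in> Kverts ?m ?n" "q \<in> Kverts ?m ?n" for p q
    using that side side' assms(1) unfolding Kverts_def Kedges_def bi_edges_doubleton_iff
    by auto
  moreover have "family_member (?m, ?n, negs) (\<lambda>f. pos (\<phi> ` f))"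
    using assms(6) unfolding family_member_def negative_pairs_def by (auto simp: \<phi>_def)
  ultimately show ?thesis
    unfolding contains_family_def contains_induced_def by fastforce
qed

lemma contains_forbidden_F1:
  assumes "X \<inter> Y = {}" "a1 \<noteq> a2" "b1 \<noteq> b2"
    and "{(a1, b1), (a1, b2), (a2, b1), (a2, b2)} \<subseteq> negative_pairs X Y pos"
  shows "contains_forbidden X Y pos"
proof -
  have "contains_family F1 (X \<union> Y) (bi_edges X Y) pos"
    using contains_family_if_negative_pairs[OF assms(1), of "[a1, a2]" "[b1, b2]"] assms
    unfolding F1_def negative_pairs_def by (simp add: numeral_2_eq_2)
  then show ?thesis unfolding contains_forbidden_def by blast
qed

lemma contains_forbidden_F2:
  assumes "X \<inter> Y = {}" "a1 \<noteq> a2" "distinct [b1, b2, b3]"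
    and "{(a1, b1), (a1, b2), (a2, b2), (a2, b3)} \<subseteq> negative_pairs X Y pos"
  shows "contains_forbidden X Y pos"
proof -
  have "contains_family F2 (X \<union> Y) (bi_edges X Y) pos"
    using contains_family_if_negative_pairs[OF assms(1), of "[a1, a2]" "[b1, b2, b3]"] assms
    unfolding F2_def negative_pairs_def by (simp add: numeral_2_eq_2 numeral_3_eq_3)
  then show ?thesis unfolding contains_forbidden_def by blast
qed

lemma contains_forbidden_F3:
  assumes "X \<inter> Y = {}" "a1 \<noteq> a2" "distinct [b1, b2, b3, b4]"
    and "{(a1, b1), (a1, b2), (a2, b3), (a2, b4)} \<subseteq> negative_pairs X Y pos"
  shows "contains_forbidden X Y pos"
proof -
  have "contains_family F3 (X \<union> Y) (bi_edges X Y) pos"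
    using contains_family_if_negative_pairs[OF assms(1), of "[a1, a2]" "[b1, b2, b3, b4]"] assms
    unfolding F3_def negative_pairs_def by (simp add: numeral_2_eq_2 numeral_3_eq_3 numeral_Bit0)
  then show ?thesis unfolding contains_forbidden_def by blast
qed

lemma contains_forbidden_F4:
  assumes "X \<inter> Y = {}" "distinct [a1, a2, a3]" "distinct [b1, b2, b3]"
    and "{(a1, b1), (a2, b2), (a3, b3)} \<subseteq> negative_pairs X Y pos"
  shows "contains_forbidden X Y pos"
proof -
  have "contains_family F4 (X \<union> Y) (bi_edges X Y) pos"
    using contains_family_if_negative_pairs[OF assms(1), of "[a1, a2, a3]" "[b1, b2, b3]"] assms
    unfolding F4_def negative_pairs_def by (simp add: numeral_3_eq_3)
  then show ?thesis unfolding contains_forbidden_def by blast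
qed

lemma contains_forbidden_two_rows:
  assumes "X \<inter> Y = {}" "r1 \<noteq> r2" "c1 \<noteq> c2" "c3 \<noteq> c2" "c4 \<noteq> c1"
    and "{(r1, c1), (r2, c2), (r2, c3), (r1, c4)} \<subseteq> negative_pairs X Y pos"
  shows "contains_forbidden X Y pos"
proof -
  consider "c4 = c2" "c3 = c1" | "c4 = c2" "c3 \<noteq> c1" | "c4 \<noteq> c2" "c3 = c1"
    | "c4 \<noteq> c2" "c3 \<noteq> c1" "c3 = c4" | "c4 \<noteq> c2" "c3 \<noteq> c1" "c3 \<noteq> c4"
    by blast
  then show ?thesis
  proof cases
    case 1
    then show ?thesis using assms by (intro contains_forbidden_F1[of X Y r1 r2 c1 c2]) auto
  next
    case 2
    then show ?thesis using assms by (intro contains_forbidden_F2[of X Y r1 r2 c1 c2 c3]) auto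
  next
    case 3
    then show ?thesis using assms by (intro contains_forbidden_F2[of X Y r1 r2 c4 c1 c2]) auto
  next
    case 4
    then show ?thesis using assms by (intro contains_forbidden_F2[of X Y r1 r2 c1 c4 c2]) auto
  next
    case 5
    then show ?thesis using assms by (intro contains_forbidden_F3[of X Y r1 r2 c1 c4 c2 c3]) auto
  qed
qed

text \<open>Three pairwise disjoint negative edges form \<open>F4\<close>. Otherwise \<open>x3y3\<close> shares \<open>x2\<close> or \<open>y1\<close> and
  \<open>x4y4\<close> shares \<open>x1\<close> or \<open>y2\<close>, and the four edges crowd onto two rows or two columns, where they
  form \<open>F1\<close>, \<open>F2\<close> or \<open>F3\<close>.\<close>

lemma contains_forbidden_four_negatives:
  assumes "X \<inter> Y = {}"
    and "{(x1, y1), (x2, y2), (x3, y3), (x4, y4)} \<subseteq> negative_pairs X Y pos"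
    and "x2 \<noteq> x1" "y2 \<noteq> y1" "x3 \<noteq> x1" "y3 \<noteq> y2" "x4 \<noteq> x2" "y4 \<noteq> y1"
  shows "contains_forbidden X Y pos"
proof -
  consider "x3 \<noteq> x2" "y3 \<noteq> y1" | "x4 \<noteq> x1" "y4 \<noteq> y2" | "x3 = x2" "x4 = x1" | "y3 = y1" "y4 = y2"
    | "x3 = x2" "y4 = y2" "y3 \<noteq> y1" "x4 \<noteq> x1" | "y3 = y1" "x4 = x1" "y4 \<noteq> y2" "x3 \<noteq> x2"
    by blast
  then show ?thesis
  proof cases
    case 1
    then show ?thesis using assms by (intro contains_forbidden_F4[of X Y x1 x2 x3 y1 y2 y3]) auto
  next
    case 2
    then show ?thesis using assms by (intro contains_forbidden_F4[of X Y x1 x2 x4 y1 y2 y4]) auto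
  next
    case 3
    then show ?thesis
      using assms by (intro contains_forbidden_two_rows[of X Y x1 x2 y1 y2 y3 y4]) auto
  next
    case 4
    have "contains_forbidden Y X pos"
      by (rule contains_forbidden_two_rows[of Y X y1 y2 x1 x2 x4 x3])
        (use 4 assms in \<open>auto simp: negative_pairs_commute[of X Y pos]\<close>)
    then show ?thesis using contains_forbidden_commute[of X Y pos] by simp
  next
    case 5
    then show ?thesis using assms by (intro contains_forbidden_F4[of X Y x1 x2 x4 y1 y3 y2]) auto
  next
    case 6
    then show ?thesis using assms by (intro contains_forbidden_F4[of X Y x3 x2 x1 y1 y2 y4]) auto
  qed
qed

lemma contains_forbidden_if_not_on_cross:
  assumes "X \<inter> Y = {}" "\<not> on_cross (negative_pairs X Y pos)"
  shows "contains_forbidden X Y pos"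
proof -
  let ?N = "negative_pairs X Y pos"
  have avoid: "\<exists>x y. (x, y) \<in> ?N \<and> x \<noteq> a \<and> y \<noteq> b" for a b
  proof -
    have "\<not> (\<forall>(x, y)\<in>?N. x = a \<or> y = b)" using assms(2) unfolding on_cross_def by blast
    then show ?thesis by auto
  qed
  obtain x1 y1 where "(x1, y1) \<in> ?N" using avoid by blast
  moreover obtain x2 y2 where "(x2, y2) \<in> ?N" "x2 \<noteq> x1" "y2 \<noteq> y1" using avoid by blast
  moreover obtain x3 y3 where "(x3, y3) \<in> ?N" "x3 \<noteq> x1" "y3 \<noteq> y2" using avoid by blast
  moreover obtain x4 y4 where "(x4, y4) \<in> ?N" "x4 \<noteq> x2" "y4 \<noteq> y1" using avoid by blast
  ultimately show ?thesis
    using contains_forbidden_four_negatives[OF assms(1), of x1 y1 x2 y2 x3 y3 x4 y4] by auto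
qed

theorem theorem2p2:
  fixes X Y :: "'a set" and E :: "'a set set" and pos :: "'a set \<Rightarrow> bool"
  assumes "signed_complete_bigraph X Y E"
  shows "chordal X Y E pos \<longleftrightarrow>
           \<not> (\<exists>F \<in> {F1, F2, F3, F4}. contains_family F (X \<union> Y) E pos)"
proof -
  have disj: "X \<inter> Y = {}" and E: "E = bi_edges X Y"
    using assms unfolding signed_complete_bigraph_def by auto
  have "chordal X Y E pos \<longleftrightarrow> on_cross (negative_pairs X Y pos)"
    by (rule chordal_iff_on_cross[OF assms])
  also have "\<dots> \<longleftrightarrow> \<not> contains_forbidden X Y pos"
    using not_contains_forbidden_if_on_cross[OF disj] contains_forbidden_if_not_on_cross[OF disj]
    by blast
  finally show ?thesis unfolding contains_forbidden_def E .
qed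

end
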